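(* In the large-election setting of the context, let $\rho=\frac{q-1/2}{1-q}$. If $v_\ell/v_w>\rho$, there exists $\lambda^*>0$ such that for every $\lambda\in(0,\lambda^* )$ and every $\varepsilon\in(0,1)$ there is $N_\varepsilon$ such that for all odd $n>N_\varepsilon$ the $n$-voter problem (with this $\lambda$) has a strict equilibrium in which the inferior policy $p_*$ wins with probability at least $1-\varepsilon$. Otherwise (if $v_\ell/v_w\le\rho$), for every odd population size $n$ and every $\lambda\in(0,1)$, the optimal policy $p^*$ wins with probability $1$ in every equilibrium.
   Context: Fix $q\in[1/2,1)$ and $v_w,v_\ell>0$ with $v_\ell/v_w<q/(1-q)$. For each odd $n\ge3$ and $\lambda\in(0,1)$, the $n$-voter collective choice problem is: voters $1,\dots,n$ vote for $p^*$ or $p_*$; a policy wins iff it gets more than $(n-1)/2$ votes. Exactly $\lceil qn\rceil$ voters are winners, the set of winners uniformly distributed among subsets of that size; a winner's payoff from $p^*$ exceeds that from $p_*$ by $v_w$, a loser's is lower by $v_\ell$. Independently, each voter with probability $\lambda$ privately learns whether she is a winner, and otherwise receives an uninformative signal. A strategy maps a voter's signal to a probability of voting $p^*$. "Equilibrium" means Bayes–Nash equilibrium in weakly undominated strategies (informed winners vote $p^*$, informed losers vote $p_*$); a strict equilibrium is one where each voter's strategy is her unique best response. *)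

theory Defs
  imports Complex_Main
begin

datatype signal = WinSig | LoseSig | NoSig

definition num_winners :: "nat \<Rightarrow> real \<Rightarrow> nat" where
  "num_winners n q = nat \<lceil>q * real n\<rceil>"

text \<open>Possible winner sets (uniformly distributed).\<close>
definition winner_sets :: "nat \<Rightarrow> real \<Rightarrow> nat set set" where
  "winner_sets n q = {W. W \<subseteq> {..<n} \<and> card W = num_winners n q}"

text \<open>A strategy profile: sigma i s = probability that voter i votes p* after signal s.
  Probability that voter j votes p* given whether she is a winner.\<close>
definition vote_prob :: "real \<Rightarrow> (nat \<Rightarrow> signal \<Rightarrow> real) \<Rightarrow> nat \<Rightarrow> bool \<Rightarrow> real" where
  "vote_prob lam \<sigma> j w = lam * \<sigma> j (if w then WinSig else LoseSig) + (1 - lam) * \<sigma> j NoSig"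

text \<open>Probability (given winner set W) that exactly the voters in V (among the voters in A)
  vote p*, votes being conditionally independent.\<close>
definition prob_votes ::
  "real \<Rightarrow> (nat \<Rightarrow> signal \<Rightarrow> real) \<Rightarrow> nat set \<Rightarrow> nat set \<Rightarrow> nat set \<Rightarrow> real" where
  "prob_votes lam \<sigma> W A V =
     (\<Prod>j\<in>A. if j \<in> V then vote_prob lam \<sigma> j (j \<in> W) else 1 - vote_prob lam \<sigma> j (j \<in> W))"

definition pstar_wins :: "nat \<Rightarrow> nat set \<Rightarrow> bool" where
  "pstar_wins n V \<longleftrightarrow> (n - 1) div 2 < card V"

definition win_prob :: "nat \<Rightarrow> real \<Rightarrow> real \<Rightarrow> (nat \<Rightarrow> signal \<Rightarrow> real) \<Rightarrow> real" where
  "win_prob n q lam \<sigma> =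
     (\<Sum>W\<in>winner_sets n q. \<Sum>V\<in>Pow {..<n}.
        if pstar_wins n V then prob_votes lam \<sigma> W {..<n} V else 0)
     / real (card (winner_sets n q))"

text \<open>Payoff of voter i (winner set W) when p* wins (b = True) or p_* wins (b = False);
  a winner gains vw from p*, a loser gains vl from p_*.\<close>
definition util :: "real \<Rightarrow> real \<Rightarrow> nat \<Rightarrow> nat set \<Rightarrow> bool \<Rightarrow> real" where
  "util vw vl i W b = (if i \<in> W then (if b then vw else 0) else (if b then 0 else vl))"

text \<open>Winner sets consistent with voter i's signal (posterior is uniform on this set).\<close>
definition cond_sets :: "nat \<Rightarrow> real \<Rightarrow> nat \<Rightarrow> signal \<Rightarrow> nat set set" where
  "cond_sets n q i s = (case s of
      WinSig \<Rightarrow> {W \<in> winner_sets n q. i \<in> W}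
    | LoseSig \<Rightarrow> {W \<in> winner_sets n q. i \<notin> W}
    | NoSig \<Rightarrow> winner_sets n q)"

text \<open>Interim expected payoff of voter i with signal s who votes p* with probability x,
  the others playing sigma.\<close>
definition interim_payoff ::
  "nat \<Rightarrow> real \<Rightarrow> real \<Rightarrow> real \<Rightarrow> real \<Rightarrow> (nat \<Rightarrow> signal \<Rightarrow> real) \<Rightarrow> nat \<Rightarrow> signal \<Rightarrow> real \<Rightarrow> real" where
  "interim_payoff n q lam vw vl \<sigma> i s x =
     (\<Sum>W\<in>cond_sets n q i s. \<Sum>V\<in>Pow ({..<n} - {i}).
        prob_votes lam \<sigma> W ({..<n} - {i}) V *
          (x * util vw vl i W (pstar_wins n (insert i V))
           + (1 - x) * util vw vl i W (pstar_wins n V)))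
     / real (card (cond_sets n q i s))"

definition valid_profile :: "nat \<Rightarrow> (nat \<Rightarrow> signal \<Rightarrow> real) \<Rightarrow> bool" where
  "valid_profile n \<sigma> \<longleftrightarrow> (\<forall>i<n. \<forall>s. 0 \<le> \<sigma> i s \<and> \<sigma> i s \<le> 1)"

text \<open>Weakly undominated: informed winners vote p*, informed losers vote p_*.\<close>
definition undominated :: "nat \<Rightarrow> (nat \<Rightarrow> signal \<Rightarrow> real) \<Rightarrow> bool" where
  "undominated n \<sigma> \<longleftrightarrow> (\<forall>i<n. \<sigma> i WinSig = 1 \<and> \<sigma> i LoseSig = 0)"

text \<open>Bayes-Nash equilibrium in weakly undominated strategies (best response at every
  signal that occurs with positive probability; for lam in (0,1) these are exactly the
  signals with nonempty cond_sets).\<close>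
definition is_equilibrium ::
  "nat \<Rightarrow> real \<Rightarrow> real \<Rightarrow> real \<Rightarrow> real \<Rightarrow> (nat \<Rightarrow> signal \<Rightarrow> real) \<Rightarrow> bool" where
  "is_equilibrium n q lam vw vl \<sigma> \<longleftrightarrow>
     valid_profile n \<sigma> \<and> undominated n \<sigma> \<and>
     (\<forall>i<n. \<forall>s. cond_sets n q i s \<noteq> {} \<longrightarrow>
        (\<forall>x\<in>{0..1}. interim_payoff n q lam vw vl \<sigma> i s x
                     \<le> interim_payoff n q lam vw vl \<sigma> i s (\<sigma> i s)))"

definition is_strict_equilibrium ::
  "nat \<Rightarrow> real \<Rightarrow> real \<Rightarrow> real \<Rightarrow> real \<Rightarrow> (nat \<Rightarrow> signal \<Rightarrow> real) \<Rightarrow> bool" where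
  "is_strict_equilibrium n q lam vw vl \<sigma> \<longleftrightarrow>
     valid_profile n \<sigma> \<and> undominated n \<sigma> \<and>
     (\<forall>i<n. \<forall>s. cond_sets n q i s \<noteq> {} \<longrightarrow>
        (\<forall>x\<in>{0..1}. x \<noteq> \<sigma> i s \<longrightarrow> interim_payoff n q lam vw vl \<sigma> i s x
                     < interim_payoff n q lam vw vl \<sigma> i s (\<sigma> i s)))"

end

theory Submission
  imports Defs
begin

text \<open>
  The interim payoff of a voter is affine in her own probability of voting for p*, with slope
  proportional to her expected gain at a pivotal event, where the other n - 1 votes split m : m
  (n = 2m + 1). With K = num_winners n q, everything hinges on comparing vw (K - m) with
  vl (n - K), that is, to first order, vw (q - 1/2) with vl (1 - q).

  If vl/vw > \<rho>, let informed winners vote p* and everybody else p_*. The others split m : m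
  exactly when m of the other winners are informed, and then the gain of an uninformed voter has
  the sign of vw (K - m) - vl (1 - \<lambda>) (n - K), which is negative for small \<lambda> and large n.
  So this profile is a strict equilibrium, and p* wins only if more than m voters are informed,
  which has probability at most (4\<lambda>)^m.

  If vl/vw \<le> \<rho>, then vl (n - K) < vw (K - m) for every odd n. Conditioning on the set of
  informed voters, the winner sets compatible with a pivotal vote profile contribute
  vw C(M, k) - vl C(M, k + 1) \<ge> 0 to an uninformed voter's gain, so this gain is nonnegative,
  and positive once some pivotal profile compatible with her being a winner has positive
  probability. If p* lost with positive probability, some uninformed winner would vote p_*;
  letting the other voters switch one at a time to voting their type produces such a pivotal
  profile, so she would strictly prefer to vote p*.
\<close>

lemma Suc_times_binomial_Suc: "Suc k * (n choose Suc k) = (n - k) * (n choose k)"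
  by (metis binomial_absorption binomial_absorb_comp)

lemma binomial_diff_sign:
  fixes a b :: real
  assumes "b * real (n - k) < a * real (Suc k)"
  shows "0 \<le> a * (n choose k) - b * (n choose Suc k)"
    and "k \<le> n \<Longrightarrow> 0 < a * (n choose k) - b * (n choose Suc k)"
proof -
  define s d where "s = real (Suc k)" and "d = real (n - k)"
  have s_pos: "0 < s"
    unfolding s_def by simp
  have absorb: "s * (n choose Suc k) = d * (n choose k)"
    unfolding s_def d_def by (metis of_nat_mult Suc_times_binomial_Suc)
  have "s * (a * (n choose k) - b * (n choose Suc k))
      = a * s * (n choose k) - b * (s * (n choose Suc k))"
    by (simp add: algebra_simps)
  also have "\<dots> = real (n choose k) * (a * s - b * d)"
    unfolding absorb by (simp add: algebra_simps)
  finally have eq: "a * (n choose k) - b * (n choose Suc k) = real (n choose k) * (a * s - b * d) / s"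
    using s_pos by (simp add: field_simps)
  have "0 < a * s - b * d"
    using assms unfolding s_def d_def by simp
  show "0 \<le> a * (n choose k) - b * (n choose Suc k)"
    unfolding eq using \<open>0 < a * s - b * d\<close> s_pos by simp
  show "0 < a * (n choose k) - b * (n choose Suc k)" if "k \<le> n"
    unfolding eq using \<open>0 < a * s - b * d\<close> s_pos that by simp
qed

lemma binomial_product_absorb:
  assumes "m < K" "K \<le> n"
  shows "(K - m) * ((n - 1) choose K) * (K choose m)
    = (n - K) * ((n - 1) choose (K - 1)) * ((K - 1) choose m)"
proof -
  have "K * ((n - 1) choose K) = (n - K) * ((n - 1) choose (K - 1))"
    using Suc_times_binomial_Suc[of "K - 1" "n - 1"] assms by (simp add: Suc_diff_le)
  moreover have "(K - m) * (K choose m) = K * ((K - 1) choose m)"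
    by (rule binomial_absorb_comp)
  ultimately have "K * ((K - m) * ((n - 1) choose K) * (K choose m))
      = K * ((n - K) * ((n - 1) choose (K - 1)) * ((K - 1) choose m))"
    by (metis mult.assoc mult.left_commute)
  then show ?thesis
    using assms by simp
qed

lemma prod_if_mem_eq:
  fixes f g :: "'a \<Rightarrow> 'b::comm_monoid_mult"
  assumes "finite A" "V \<subseteq> A"
  shows "(\<Prod>j\<in>A. if j \<in> V then f j else g j) = prod f V * prod g (A - V)"
proof -
  have "A \<inter> {j. j \<in> V} = V" "A \<inter> - {j. j \<in> V} = A - V"
    using assms(2) by auto
  then show ?thesis
    using prod.If_cases[OF assms(1), of "\<lambda>j. j \<in> V" f g] by simp
qed

lemma sum_Pow_prod_Bernoulli:
  fixes p :: "'a \<Rightarrow> 'b::comm_ring_1"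
  assumes "finite A"
  shows "(\<Sum>V\<in>Pow A. \<Prod>j\<in>A. if j \<in> V then p j else 1 - p j) = 1"
proof -
  have "(1::'b) = (\<Prod>j\<in>A. p j + (1 - p j))"
    by simp
  also have "\<dots> = (\<Sum>V\<in>Pow A. prod p V * (\<Prod>j\<in>A - V. 1 - p j))"
    using assms by (rule prod_add)
  also have "\<dots> = (\<Sum>V\<in>Pow A. \<Prod>j\<in>A. if j \<in> V then p j else 1 - p j)"
    using assms by (intro sum.cong refl) (simp add: prod_if_mem_eq)
  finally show ?thesis
    by simp
qed

lemma prod_times_indicator:
  fixes c :: "'b::comm_semiring_1"
  assumes "finite I"
  shows "(\<Prod>j\<in>I. c * (if P j then 1 else 0)) = (if \<forall>j\<in>I. P j then c ^ card I else 0)"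
  using assms by (induction I rule: finite_induct) auto

lemma card_subsets_with_trace:
  assumes "finite U" "F \<subseteq> U" "A \<subseteq> F" "card A \<le> k"
  shows "card {W. W \<subseteq> U \<and> card W = k \<and> W \<inter> F = A} = card (U - F) choose (k - card A)"
proof -
  let ?L = "{W. W \<subseteq> U \<and> card W = k \<and> W \<inter> F = A}"
  let ?R = "{X. X \<subseteq> U - F \<and> card X = k - card A}"
  have fin: "finite A" "\<And>X. X \<subseteq> U \<Longrightarrow> finite X"
    using assms by (auto intro: finite_subset)
  have card_Un: "card (A \<union> X) = card A + card X" if "X \<subseteq> U - F" for X
    using that assms(3) fin by (intro card_Un_disjoint) auto
  have split: "A \<union> (W - F) = W" if "W \<inter> F = A" for W
    using that by blast
  have "bij_betw (\<lambda>W. W - F) ?L ?R"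
  proof (rule bij_betw_byWitness[where f' = "\<lambda>X. A \<union> X"])
    show "\<forall>W\<in>?L. A \<union> (W - F) = W"
      using split by blast
    show "\<forall>X\<in>?R. A \<union> X - F = X"
      using assms(3) by blast
    show "(\<lambda>W. W - F) ` ?L \<subseteq> ?R"
    proof
      fix X assume "X \<in> (\<lambda>W. W - F) ` ?L"
      then obtain W where W: "W \<subseteq> U" "card W = k" "W \<inter> F = A" "X = W - F"
        by blast
      then have "card W = card A + card X"
        using card_Un[of X] split[OF W(3)] by auto
      then show "X \<in> ?R"
        using W by auto
    qed
    show "(\<lambda>X. A \<union> X) ` ?R \<subseteq> ?L"
      using card_Un assms(2-4) by auto
  qed
  then have "card ?L = card ?R"
    by (rule bij_betw_same_card)
  also have "\<dots> = card (U - F) choose (k - card A)"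
    using assms(1) by (intro n_subsets) simp
  finally show ?thesis .
qed

lemma discrete_IVT_subsets:
  fixes f :: "'a set \<Rightarrow> nat"
  assumes "finite X" "\<And>Y x. Y \<subseteq> X \<Longrightarrow> x \<in> X \<Longrightarrow> f (insert x Y) \<le> f Y + 1"
    and "f {} \<le> t" "t \<le> f X"
  shows "\<exists>Y\<subseteq>X. f Y = t"
  using assms
proof (induction X rule: finite_induct)
  case empty
  then show ?case
    by auto
next
  case (insert x F)
  show ?case
  proof (cases "t \<le> f F")
    case True
    have "f (insert y Y) \<le> f Y + 1" if "Y \<subseteq> F" "y \<in> F" for Y y
      using insert.prems(1) that by blast
    then obtain Y where "Y \<subseteq> F" "f Y = t"
      using insert.IH insert.prems(2) True by blast
    then show ?thesis
      by blast
  next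
    case False
    have "f (insert x F) \<le> f F + 1"
      using insert.prems(1)[of F x] by blast
    then have "f (insert x F) = t"
      using False insert.prems(3) by linarith
    then show ?thesis
      by blast
  qed
qed

section \<open>Winner sets\<close>

lemma num_winners_le:
  assumes "0 \<le> q" "q < 1"
  shows "num_winners n q \<le> n"
proof -
  have "q * real n \<le> real n"
    using assms mult_right_mono[of q 1 "real n"] by simp
  then show ?thesis
    unfolding num_winners_def by (simp add: ceiling_le_iff nat_le_iff)
qed

lemma majority_lt_num_winners:
  assumes "1/2 \<le> q" "odd n"
  shows "(n - 1) div 2 < num_winners n q"
proof -
  have "real ((n - 1) div 2) < real n / 2"
    using assms(2) by (auto elim: oddE)
  also have "\<dots> \<le> q * real n"
    using assms(1) mult_right_mono[of "1/2" q "real n"] by simp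
  also have "\<dots> \<le> of_int \<lceil>q * real n\<rceil>"
    by (rule le_of_int_ceiling)
  finally show ?thesis
    unfolding num_winners_def by linarith
qed

lemma winner_sets_subset: "W \<in> winner_sets n q \<Longrightarrow> W \<subseteq> {..<n}"
  unfolding winner_sets_def by auto

lemma card_winner_set: "W \<in> winner_sets n q \<Longrightarrow> card W = num_winners n q"
  unfolding winner_sets_def by auto

lemma finite_winner_sets: "finite (winner_sets n q)"
  by (rule finite_subset[of _ "Pow {..<n}"]) (auto simp: winner_sets_def)

lemma card_winner_sets_pos:
  assumes "num_winners n q \<le> n"
  shows "0 < card (winner_sets n q)"
  using assms n_subsets[of "{..<n}" "num_winners n q"] unfolding winner_sets_def by simp

lemma card_winner_sets_trace:
  assumes "i < n" "I \<subseteq> {..<n} - {i}" "card (V \<inter> I) < num_winners n q"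
  shows "card {W \<in> winner_sets n q. i \<in> W \<and> W \<inter> I = V \<inter> I}
      = (n - 1 - card I) choose (num_winners n q - 1 - card (V \<inter> I))"
    and "card {W \<in> winner_sets n q. i \<notin> W \<and> W \<inter> I = V \<inter> I}
      = (n - 1 - card I) choose (num_winners n q - card (V \<inter> I))"
proof -
  have fin: "finite I" "finite (V \<inter> I)"
    using assms(2) by (auto intro: finite_subset)
  have "i \<notin> I"
    using assms(2) by auto
  then have rest: "card ({..<n} - insert i I) = n - 1 - card I"
    using assms(1,2) fin by (subst card_Diff_subset) auto
  have trace: "card (insert i (V \<inter> I)) = Suc (card (V \<inter> I))"
    using fin \<open>i \<notin> I\<close> by simp
  have "{W \<in> winner_sets n q. i \<in> W \<and> W \<inter> I = V \<inter> I}
      = {W. W \<subseteq> {..<n} \<and> card W = num_winners n q \<and> W \<inter> insert i I = insert i (V \<inter> I)}"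
    using assms(2) unfolding winner_sets_def by auto
  also have "card \<dots> = (n - 1 - card I) choose (num_winners n q - 1 - card (V \<inter> I))"
    using assms fin rest trace by (subst card_subsets_with_trace) auto
  finally show "card {W \<in> winner_sets n q. i \<in> W \<and> W \<inter> I = V \<inter> I}
      = (n - 1 - card I) choose (num_winners n q - 1 - card (V \<inter> I))" .
  have "{W \<in> winner_sets n q. i \<notin> W \<and> W \<inter> I = V \<inter> I}
      = {W. W \<subseteq> {..<n} \<and> card W = num_winners n q \<and> W \<inter> insert i I = V \<inter> I}"
    using assms(2) unfolding winner_sets_def by auto
  also have "card \<dots> = (n - 1 - card I) choose (num_winners n q - card (V \<inter> I))"
    using assms fin rest trace by (subst card_subsets_with_trace) auto
  finally show "card {W \<in> winner_sets n q. i \<notin> W \<and> W \<inter> I = V \<inter> I}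
      = (n - 1 - card I) choose (num_winners n q - card (V \<inter> I))" .
qed

section \<open>Interim payoffs\<close>

definition pivot_prob :: "nat \<Rightarrow> real \<Rightarrow> (nat \<Rightarrow> signal \<Rightarrow> real) \<Rightarrow> nat \<Rightarrow> nat set \<Rightarrow> real" where
  "pivot_prob n lam \<sigma> i W =
     (\<Sum>V\<in>{V \<in> Pow ({..<n} - {i}). card V = (n - 1) div 2}. prob_votes lam \<sigma> W ({..<n} - {i}) V)"

definition pivotal_gain ::
  "nat \<Rightarrow> real \<Rightarrow> real \<Rightarrow> real \<Rightarrow> (nat \<Rightarrow> signal \<Rightarrow> real) \<Rightarrow> nat \<Rightarrow> nat set set \<Rightarrow> real" where
  "pivotal_gain n lam vw vl \<sigma> i C = (\<Sum>W\<in>C. (if i \<in> W then vw else - vl) * pivot_prob n lam \<sigma> i W)"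

lemma util_insert_diff:
  assumes "finite V" "i \<notin> V"
  shows "util vw vl i W (pstar_wins n (insert i V)) - util vw vl i W (pstar_wins n V)
      = (if card V = (n - 1) div 2 then (if i \<in> W then vw else - vl) else 0)"
  using assms unfolding pstar_wins_def util_def by auto

lemma sum_util_gain_eq_pivot_prob:
  "(\<Sum>V\<in>Pow ({..<n} - {i}). prob_votes lam \<sigma> W ({..<n} - {i}) V
      * (util vw vl i W (pstar_wins n (insert i V)) - util vw vl i W (pstar_wins n V)))
    = (if i \<in> W then vw else - vl) * pivot_prob n lam \<sigma> i W"
proof -
  define S P where "S = {..<n} - {i}" and "P V = prob_votes lam \<sigma> W S V" for V
  have "(\<Sum>V\<in>Pow S. P V * (util vw vl i W (pstar_wins n (insert i V)) - util vw vl i W (pstar_wins n V)))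
      = (\<Sum>V\<in>Pow S. if card V = (n - 1) div 2 then (if i \<in> W then vw else - vl) * P V else 0)"
  proof (rule sum.cong[OF refl])
    fix V assume "V \<in> Pow S"
    then have "finite V" "i \<notin> V"
      unfolding S_def by (auto intro: finite_subset)
    then show "P V * (util vw vl i W (pstar_wins n (insert i V)) - util vw vl i W (pstar_wins n V))
        = (if card V = (n - 1) div 2 then (if i \<in> W then vw else - vl) * P V else 0)"
      by (simp add: util_insert_diff)
  qed
  also have "\<dots> = (\<Sum>V\<in>{V \<in> Pow S. card V = (n - 1) div 2}. (if i \<in> W then vw else - vl) * P V)"
    by (rule sum.inter_filter[symmetric]) (simp add: S_def)
  finally show ?thesis
    unfolding pivot_prob_def P_def S_def by (simp add: sum_distrib_left)
qed

lemma interim_payoff_affine: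
  "interim_payoff n q lam vw vl \<sigma> i s x = interim_payoff n q lam vw vl \<sigma> i s 0
     + x * pivotal_gain n lam vw vl \<sigma> i (cond_sets n q i s) / real (card (cond_sets n q i s))"
proof -
  define C S where "C = cond_sets n q i s" and "S = {..<n} - {i}"
  define P u where "P W V = prob_votes lam \<sigma> W S V" and "u W V = util vw vl i W (pstar_wins n V)"
    for W V
  have "P W V * (x * u W (insert i V) + (1 - x) * u W V)
      = P W V * (0 * u W (insert i V) + (1 - 0) * u W V) + x * (P W V * (u W (insert i V) - u W V))"
    for W V
    by (simp add: algebra_simps)
  then have "(\<Sum>W\<in>C. \<Sum>V\<in>Pow S. P W V * (x * u W (insert i V) + (1 - x) * u W V))
      = (\<Sum>W\<in>C. \<Sum>V\<in>Pow S. P W V * (0 * u W (insert i V) + (1 - 0) * u W V))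
        + x * (\<Sum>W\<in>C. \<Sum>V\<in>Pow S. P W V * (u W (insert i V) - u W V))"
    by (simp only: sum.distrib sum_distrib_left)
  also have "(\<Sum>W\<in>C. \<Sum>V\<in>Pow S. P W V * (u W (insert i V) - u W V)) = pivotal_gain n lam vw vl \<sigma> i C"
    unfolding pivotal_gain_def P_def u_def S_def by (simp add: sum_util_gain_eq_pivot_prob)
  finally show ?thesis
    unfolding interim_payoff_def C_def[symmetric] S_def[symmetric] P_def[symmetric] u_def[symmetric]
    by (simp add: add_divide_distrib)
qed

lemma interim_payoff_less_iff:
  assumes "cond_sets n q i s \<noteq> {}"
  shows "interim_payoff n q lam vw vl \<sigma> i s x < interim_payoff n q lam vw vl \<sigma> i s y
     \<longleftrightarrow> x * pivotal_gain n lam vw vl \<sigma> i (cond_sets n q i s)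
         < y * pivotal_gain n lam vw vl \<sigma> i (cond_sets n q i s)"
proof -
  have "cond_sets n q i s \<subseteq> winner_sets n q"
    by (auto simp: cond_sets_def split: signal.splits)
  then have "0 < card (cond_sets n q i s)"
    using assms finite_winner_sets by (meson card_gt_0_iff finite_subset)
  then show ?thesis
    unfolding interim_payoff_affine[of n q lam vw vl \<sigma> i s x]
      interim_payoff_affine[of n q lam vw vl \<sigma> i s y]
    by (simp add: divide_less_cancel)
qed

section \<open>Equilibria in which the inferior policy wins\<close>

definition inferior_default :: "nat \<Rightarrow> signal \<Rightarrow> real" where
  "inferior_default i s = (if s = WinSig then 1 else 0)"

definition binomial_weight :: "real \<Rightarrow> nat \<Rightarrow> nat \<Rightarrow> real" where
  "binomial_weight p m k = real (k choose m) * p ^ m * (1 - p) ^ (k - m)"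

lemma prob_votes_inferior_default:
  assumes "finite A" "V \<subseteq> A"
  shows "prob_votes lam inferior_default W A V
      = (if V \<subseteq> W then lam ^ card V * (1 - lam) ^ card (A \<inter> W - V) else 0)"
proof -
  have "prob_votes lam inferior_default W A V
      = (\<Prod>j\<in>V. lam * (if j \<in> W then 1 else 0)) * (\<Prod>j\<in>A - V. if j \<in> W then 1 - lam else 1)"
    unfolding prob_votes_def prod_if_mem_eq[OF assms]
    by (intro arg_cong2[where f = "(*)"] prod.cong) (auto simp: vote_prob_def inferior_default_def)
  also have "(\<Prod>j\<in>V. lam * (if j \<in> W then 1 else 0)) = (if V \<subseteq> W then lam ^ card V else 0)"
    using prod_times_indicator[of V lam "\<lambda>j. j \<in> W"] finite_subset[OF assms(2,1)] by auto
  also have "(\<Prod>j\<in>A - V. if j \<in> W then 1 - lam else 1) = (1 - lam) ^ card (A \<inter> W - V)"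
  proof -
    have "(A - V) \<inter> {j. j \<in> W} = A \<inter> W - V"
      by auto
    then show ?thesis
      using assms(1) by (simp add: prod.If_cases)
  qed
  finally show ?thesis
    by simp
qed

lemma pivot_prob_inferior_default:
  assumes "W \<in> winner_sets n q"
  shows "pivot_prob n lam inferior_default i W = binomial_weight lam ((n - 1) div 2) (card (W - {i}))"
proof -
  define m where "m = (n - 1) div 2"
  define S where "S = {..<n} - {i}"
  have WS: "S \<inter> W = W - {i}"
    using winner_sets_subset[OF assms] unfolding S_def by auto
  have "finite W"
    using winner_sets_subset[OF assms] finite_subset by blast
  then have "card (S \<inter> W - V) = card (W - {i}) - m" if "V \<subseteq> W - {i}" "card V = m" for V
    using that unfolding WS by (metis card_Diff_subset finite_Diff finite_subset)
  then have "pivot_prob n lam inferior_default i W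
      = (\<Sum>V\<in>{V \<in> Pow S. card V = m}.
          if V \<subseteq> W - {i} then lam ^ m * (1 - lam) ^ (card (W - {i}) - m) else 0)"
    unfolding pivot_prob_def m_def[symmetric] S_def[symmetric]
    by (intro sum.cong refl) (auto simp: prob_votes_inferior_default S_def)
  also have "\<dots> = (\<Sum>V\<in>{V. V \<subseteq> W - {i} \<and> card V = m}. lam ^ m * (1 - lam) ^ (card (W - {i}) - m))"
  proof -
    have "{V \<in> {V \<in> Pow S. card V = m}. V \<subseteq> W - {i}} = {V. V \<subseteq> W - {i} \<and> card V = m}"
      using WS by auto
    then show ?thesis
      by (simp add: sum.inter_filter[symmetric] S_def)
  qed
  also have "\<dots> = binomial_weight lam m (card (W - {i}))"
    using \<open>finite W\<close> by (simp add: n_subsets binomial_weight_def)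
  finally show ?thesis
    unfolding m_def .
qed

lemma pivotal_gain_inferior_default:
  assumes "C \<subseteq> winner_sets n q"
  shows "pivotal_gain n lam vw vl inferior_default i C
      = real (card {W \<in> C. i \<in> W}) * vw * binomial_weight lam ((n - 1) div 2) (num_winners n q - 1)
        - real (card {W \<in> C. i \<notin> W}) * vl * binomial_weight lam ((n - 1) div 2) (num_winners n q)"
proof -
  define b1 b0 where "b1 = binomial_weight lam ((n - 1) div 2) (num_winners n q - 1)"
    and "b0 = binomial_weight lam ((n - 1) div 2) (num_winners n q)"
  have "finite C"
    using assms finite_winner_sets finite_subset by blast
  have "pivotal_gain n lam vw vl inferior_default i C = (\<Sum>W\<in>C. if i \<in> W then vw * b1 else - (vl * b0))"
    unfolding pivotal_gain_def b1_def b0_def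
    by (intro sum.cong refl) (use assms in \<open>auto simp: pivot_prob_inferior_default card_winner_set\<close>)
  also have "\<dots> = (\<Sum>W\<in>{W \<in> C. i \<in> W}. vw * b1) + (\<Sum>W\<in>{W \<in> C. i \<notin> W}. - (vl * b0))"
    using \<open>finite C\<close> by (simp add: sum.If_cases Int_def)
  finally show ?thesis
    unfolding b1_def b0_def by simp
qed

lemma pivotal_gain_inferior_default_uninformed_neg:
  assumes "i < n" "(n - 1) div 2 < num_winners n q" "num_winners n q \<le> n" "0 < lam" "lam < 1"
    and margin: "vw * (real (num_winners n q) - real ((n - 1) div 2))
      < vl * (1 - lam) * (real n - real (num_winners n q))"
  shows "pivotal_gain n lam vw vl inferior_default i (winner_sets n q) < 0"
proof -
  define K m where "K = num_winners n q" and "m = (n - 1) div 2"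
  have mK: "m < K" "K \<le> n"
    using assms(2,3) unfolding K_def m_def by auto
  have count_in: "card {W \<in> winner_sets n q. i \<in> W} = (n - 1) choose (K - 1)"
    and count_out: "card {W \<in> winner_sets n q. i \<notin> W} = (n - 1) choose K"
    using card_winner_sets_trace[of i n "{}" V q for V] assms(1) mK unfolding K_def by auto
  have absorb: "real (K - m) * ((n - 1) choose K) * (K choose m)
      = real (n - K) * ((n - 1) choose (K - 1)) * ((K - 1) choose m)"
    using binomial_product_absorb[OF mK] by (metis of_nat_mult)
  define P
    where "P = real ((n - 1) choose (K - 1)) * ((K - 1) choose m) * lam ^ m * (1 - lam) ^ (K - 1 - m)"
  have P_pos: "0 < P"
    unfolding P_def using mK assms(4,5) by simp
  have power_split: "(1 - lam) ^ (K - m) = (1 - lam) ^ (K - 1 - m) * (1 - lam)"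
    using mK by (simp add: Suc_diff_Suc flip: power_Suc2)
  have "real (K - m) * pivotal_gain n lam vw vl inferior_default i (winner_sets n q)
      = vw * real (K - m) * P - vl * (1 - lam) * lam ^ m * (1 - lam) ^ (K - 1 - m)
          * (real (K - m) * ((n - 1) choose K) * (K choose m))"
    unfolding pivotal_gain_inferior_default[OF order_refl] count_in count_out
      K_def[symmetric] m_def[symmetric] binomial_weight_def power_split P_def
    by (simp add: algebra_simps)
  also have "\<dots> = P * (vw * real (K - m) - vl * (1 - lam) * real (n - K))"
    unfolding absorb P_def by (simp add: algebra_simps)
  also have "\<dots> < 0"
    using P_pos margin mK unfolding K_def m_def by (simp add: mult_pos_neg of_nat_diff)
  finally show ?thesis
    using mK by (simp add: mult_less_0_iff)
qed

lemma pivotal_gain_inferior_default_informed_sign: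
  assumes "cond_sets n q i s \<noteq> {}" "s \<noteq> NoSig" "(n - 1) div 2 < num_winners n q"
    and "0 < lam" "lam < 1" "0 < vw" "0 < vl"
  shows "if s = WinSig then 0 < pivotal_gain n lam vw vl inferior_default i (cond_sets n q i s)
    else pivotal_gain n lam vw vl inferior_default i (cond_sets n q i s) < 0"
proof -
  define C m K where "C = cond_sets n q i s" and "m = (n - 1) div 2" and "K = num_winners n q"
  have "C \<subseteq> winner_sets n q"
    unfolding C_def cond_sets_def by (auto split: signal.splits)
  then have card_C: "0 < card C"
    using assms(1) finite_winner_sets unfolding C_def by (meson card_gt_0_iff finite_subset)
  have gain: "pivotal_gain n lam vw vl inferior_default i C
      = real (card {W \<in> C. i \<in> W}) * vw * binomial_weight lam m (K - 1)
        - real (card {W \<in> C. i \<notin> W}) * vl * binomial_weight lam m K"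
    unfolding m_def K_def by (rule pivotal_gain_inferior_default[OF \<open>C \<subseteq> winner_sets n q\<close>])
  have weight: "0 < binomial_weight lam m (K - 1)" "0 < binomial_weight lam m K"
    using assms(3-5) unfolding m_def K_def by (simp_all add: binomial_weight_def)
  show ?thesis
  proof (cases "s = WinSig")
    case True
    then have sets: "{W \<in> C. i \<in> W} = C" "{W \<in> C. i \<notin> W} = {}"
      unfolding C_def cond_sets_def by auto
    have "pivotal_gain n lam vw vl inferior_default i C
        = real (card C) * vw * binomial_weight lam m (K - 1)"
      unfolding gain sets by simp
    then show ?thesis
      using True card_C weight assms(6) unfolding C_def by simp
  next
    case False
    then have sets: "{W \<in> C. i \<in> W} = {}" "{W \<in> C. i \<notin> W} = C"
      using assms(2) unfolding C_def cond_sets_def by (cases s; auto)+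
    have "pivotal_gain n lam vw vl inferior_default i C
        = - real (card C) * vl * binomial_weight lam m K"
      unfolding gain sets by simp
    then show ?thesis
      using False card_C weight assms(7) unfolding C_def by (simp add: mult_pos_pos)
  qed
qed

lemma inferior_default_strict_equilibrium:
  assumes "1/2 \<le> q" "q < 1" "0 < vw" "0 < vl" "odd n" "0 < lam" "lam < 1"
    and margin: "vw * (real (num_winners n q) - real ((n - 1) div 2))
      < vl * (1 - lam) * (real n - real (num_winners n q))"
  shows "is_strict_equilibrium n q lam vw vl inferior_default"
proof -
  have mK: "(n - 1) div 2 < num_winners n q" "num_winners n q \<le> n"
    using majority_lt_num_winners[OF assms(1,5)] num_winners_le assms(1,2) by auto
  have "x * pivotal_gain n lam vw vl inferior_default i (cond_sets n q i s)
      < inferior_default i s * pivotal_gain n lam vw vl inferior_default i (cond_sets n q i s)"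
    if "i < n" "cond_sets n q i s \<noteq> {}" "x \<in> {0..1}" "x \<noteq> inferior_default i s" for i s x
  proof -
    have "if s = WinSig then 0 < pivotal_gain n lam vw vl inferior_default i (cond_sets n q i s)
      else pivotal_gain n lam vw vl inferior_default i (cond_sets n q i s) < 0"
    proof (cases "s = NoSig")
      case True
      then show ?thesis
        using pivotal_gain_inferior_default_uninformed_neg[OF that(1) mK assms(6,7) margin]
        by (simp add: cond_sets_def)
    qed (use pivotal_gain_inferior_default_informed_sign[OF that(2) _ mK(1) assms(6,7,3,4)] in simp)
    then show ?thesis
      using that(3,4) by (auto simp: inferior_default_def mult_pos_neg split: if_splits)
  qed
  then show ?thesis
    unfolding is_strict_equilibrium_def valid_profile_def undominated_def
    by (auto simp: interim_payoff_less_iff inferior_default_def)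
qed

lemma win_prob_inferior_default_le:
  assumes "0 \<le> lam" "lam \<le> 1"
  shows "win_prob n q lam inferior_default \<le> 2 ^ n * lam ^ Suc ((n - 1) div 2)"
proof -
  define B where "B = 2 ^ n * lam ^ Suc ((n - 1) div 2)"
  have term_le: "(if pstar_wins n V then prob_votes lam inferior_default W {..<n} V else 0)
      \<le> lam ^ Suc ((n - 1) div 2)" if "V \<subseteq> {..<n}" for W V
  proof (cases "pstar_wins n V \<and> V \<subseteq> W")
    case True
    then have "lam ^ card V \<le> lam ^ Suc ((n - 1) div 2)"
      using assms by (intro power_decreasing) (auto simp: pstar_wins_def)
    moreover have "(1 - lam) ^ card ({..<n} \<inter> W - V) \<le> 1"
      using assms by (intro power_le_one) auto
    ultimately show ?thesis
      using True that assms(1)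
      by (simp add: prob_votes_inferior_default mult_le_one order_trans[OF mult_left_le])
  next
    case False
    then show ?thesis
      using that assms(1) by (auto simp: prob_votes_inferior_default)
  qed
  have "(\<Sum>V\<in>Pow {..<n}. if pstar_wins n V then prob_votes lam inferior_default W {..<n} V else 0) \<le> B"
    for W
    using sum_bounded_above[of "Pow {..<n}", OF term_le] by (simp add: card_Pow B_def)
  then have "(\<Sum>W\<in>winner_sets n q. \<Sum>V\<in>Pow {..<n}.
        if pstar_wins n V then prob_votes lam inferior_default W {..<n} V else 0)
      \<le> real (card (winner_sets n q)) * B"
    by (intro sum_bounded_above)
  moreover have "0 \<le> B"
    unfolding B_def using assms(1) by simp
  ultimately show ?thesis
    unfolding win_prob_def B_def[symmetric]
    by (cases "card (winner_sets n q) = 0") (auto simp: divide_le_eq mult.commute)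
qed

lemma eventually_num_winners_margin:
  assumes "1/2 \<le> q" "0 < vw" "0 < c" "vw * (q - 1/2) < c * (1 - q)"
  shows "\<exists>N. \<forall>n. odd n \<and> N < n \<longrightarrow>
    vw * (real (num_winners n q) - real ((n - 1) div 2)) < c * (real n - real (num_winners n q))"
proof -
  define \<delta> where "\<delta> = c * (1 - q) - vw * (q - 1/2)"
  have "0 < \<delta>"
    using assms(4) unfolding \<delta>_def by simp
  obtain N where N: "(3/2 * vw + c) / \<delta> < real N"
    using reals_Archimedean2 by blast
  have "vw * (real (num_winners n q) - real ((n - 1) div 2)) < c * (real n - real (num_winners n q))"
    if "odd n" "N < n" for n
  proof -
    define K m where "K = real (num_winners n q)" and "m = real ((n - 1) div 2)"
    have K_lt: "K < q * real n + 1"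
      unfolding K_def num_winners_def using assms(1) ceiling_correct[of "q * real n"] by simp
    have m_eq: "m = (real n - 1) / 2"
      unfolding m_def using that(1) by (auto elim: oddE)
    have "(3/2 * vw + c) / \<delta> < real n"
      using N that(2) by linarith
    then have "3/2 * vw + c < real n * \<delta>"
      using \<open>0 < \<delta>\<close> by (simp add: divide_less_eq)
    then have "vw * (q * real n + 1 - m) < c * (real n - q * real n - 1)"
      unfolding m_eq \<delta>_def by (simp add: field_simps)
    moreover have "vw * (K - m) < vw * (q * real n + 1 - m)"
      using K_lt assms(2) by simp
    moreover have "c * (real n - q * real n - 1) < c * (real n - K)"
      using K_lt assms(3) by simp
    ultimately show ?thesis
      unfolding K_def m_def by linarith
  qed
  then show ?thesis
    by blast
qed

lemma eventually_power_bound: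
  fixes lam \<epsilon> :: real
  assumes "0 \<le> lam" "lam < 1/4" "0 < \<epsilon>"
  shows "\<exists>N. \<forall>n. odd n \<and> N < n \<longrightarrow> 2 ^ n * lam ^ Suc ((n - 1) div 2) \<le> \<epsilon>"
proof -
  obtain M where M: "(4 * lam) ^ M < \<epsilon>"
    using real_arch_pow_inv[OF assms(3), of "4 * lam"] assms(2) by auto
  have "2 ^ n * lam ^ Suc ((n - 1) div 2) \<le> \<epsilon>" if "odd n" "2 * M < n" for n
  proof -
    obtain m where n: "n = 2 * m + 1"
      using \<open>odd n\<close> by (rule oddE)
    have "2 ^ n * lam ^ Suc ((n - 1) div 2) = (2 * lam) * (4 * lam) ^ m"
      unfolding n by (simp add: power_mult_distrib power_mult)
    also have "\<dots> \<le> (4 * lam) ^ m"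
      using assms(1,2) by (intro mult_left_le_one_le) auto
    also have "\<dots> \<le> (4 * lam) ^ M"
      using assms(1,2) that(2) n by (intro power_decreasing) auto
    finally show ?thesis
      using M by linarith
  qed
  then show ?thesis
    by blast
qed

lemma eventually_strict_equilibrium_inferior_wins:
  assumes "1/2 \<le> q" "q < 1" "0 < vw" "0 < vl" "0 < lam" "lam < 1/4"
    and "vw * (q - 1/2) < vl * (1 - lam) * (1 - q)" "0 < \<epsilon>"
  shows "\<exists>N::nat. \<forall>n. odd n \<and> 3 \<le> n \<and> N < n \<longrightarrow>
    (\<exists>\<sigma>. is_strict_equilibrium n q lam vw vl \<sigma> \<and> 1 - win_prob n q lam \<sigma> \<ge> 1 - \<epsilon>)"
proof -
  obtain N1 where N1: "\<And>n. odd n \<Longrightarrow> N1 < n \<Longrightarrow>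
      vw * (real (num_winners n q) - real ((n - 1) div 2))
        < vl * (1 - lam) * (real n - real (num_winners n q))"
    using eventually_num_winners_margin[OF assms(1,3), of "vl * (1 - lam)"] assms(4-7) by auto
  obtain N2 where N2: "\<And>n. odd n \<Longrightarrow> N2 < n \<Longrightarrow> 2 ^ n * lam ^ Suc ((n - 1) div 2) \<le> \<epsilon>"
    using eventually_power_bound[OF _ assms(6,8)] assms(5) by auto
  have "is_strict_equilibrium n q lam vw vl inferior_default
      \<and> 1 - win_prob n q lam inferior_default \<ge> 1 - \<epsilon>" if "odd n" "max N1 N2 < n" for n
  proof
    show "is_strict_equilibrium n q lam vw vl inferior_default"
      using inferior_default_strict_equilibrium[OF assms(1-4) that(1) assms(5) _ N1[OF that(1)]]
        that(2) assms(6) by simp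
    have "win_prob n q lam inferior_default \<le> \<epsilon>"
      using win_prob_inferior_default_le[of lam n q] N2[OF that(1)] that(2) assms(5,6) by simp
    then show "1 - win_prob n q lam inferior_default \<ge> 1 - \<epsilon>"
      by simp
  qed
  then show ?thesis
    by blast
qed

lemma exists_lstar_inferior_wins:
  assumes "1/2 \<le> q" "q < 1" "0 < vw" "0 < vl" "(q - 1/2) / (1 - q) < vl / vw"
  shows "\<exists>lstar>0. lstar \<le> 1 \<and> (\<forall>lam. 0 < lam \<and> lam < lstar \<longrightarrow> (\<forall>\<epsilon>. 0 < \<epsilon> \<and> \<epsilon> < 1 \<longrightarrow>
    (\<exists>N::nat. \<forall>n. odd n \<and> 3 \<le> n \<and> N < n \<longrightarrow>
      (\<exists>\<sigma>. is_strict_equilibrium n q lam vw vl \<sigma> \<and> 1 - win_prob n q lam \<sigma> \<ge> 1 - \<epsilon>))))"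
proof -
  have gap: "vw * (q - 1/2) / (vl * (1 - q)) < 1"
    using assms(2-5) by (simp add: field_simps)
  define lstar where "lstar = min (1/4) (1 - vw * (q - 1/2) / (vl * (1 - q)))"
  have "vw * (q - 1/2) < vl * (1 - lam) * (1 - q)" if "lam < lstar" for lam
  proof -
    have "vw * (q - 1/2) / (vl * (1 - q)) < 1 - lam"
      using that unfolding lstar_def by linarith
    then show ?thesis
      using assms(2,4) by (simp add: pos_divide_less_eq mult.commute mult.left_commute)
  qed
  then show ?thesis
    using eventually_strict_equilibrium_inferior_wins[OF assms(1-4)] gap
    by (intro exI[of _ lstar]) (auto simp: lstar_def)
qed

section \<open>The optimal policy wins in every equilibrium\<close>

lemma num_winners_margin:
  assumes "1/2 \<le> q" "q < 1" "0 < vw" "0 \<le> vl" "vl / vw \<le> (q - 1/2) / (1 - q)" "odd n"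
  shows "vl * (real n - real (num_winners n q)) < vw * (real (num_winners n q) - real ((n - 1) div 2))"
proof -
  define K where "K = real (num_winners n q)"
  have K_ge: "q * real n \<le> K"
    unfolding K_def num_winners_def using assms(1) le_of_int_ceiling[of "q * real n"] by simp
  have "vl * (1 - q) \<le> vw * (q - 1/2)"
    using assms(2,3,5) by (simp add: field_simps)
  then have "vl * (1 - q) * real n \<le> vw * (q - 1/2) * real n"
    by (rule mult_right_mono) simp
  moreover have "vl * (real n - K) \<le> vl * (real n - q * real n)"
    using K_ge assms(4) by (intro mult_left_mono) auto
  moreover have "real ((n - 1) div 2) = (real n - 1) / 2"
    using assms(6) by (auto elim: oddE)
  then have "vw * (q * real n - real n / 2) < vw * (K - real ((n - 1) div 2))"
    using K_ge assms(3) by (intro mult_strict_left_mono) auto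
  ultimately show ?thesis
    unfolding K_def by (simp add: algebra_simps)
qed

lemma vote_factor_bounds:
  assumes "valid_profile n \<sigma>" "undominated n \<sigma>" "j < n" "0 < lam" "lam < 1"
  shows "0 \<le> (if j \<in> V then vote_prob lam \<sigma> j (j \<in> W) else 1 - vote_prob lam \<sigma> j (j \<in> W))"
    and "(j \<in> V \<longleftrightarrow> j \<in> W) \<Longrightarrow>
      0 < (if j \<in> V then vote_prob lam \<sigma> j (j \<in> W) else 1 - vote_prob lam \<sigma> j (j \<in> W))"
proof -
  have \<sigma>: "0 \<le> \<sigma> j NoSig" "\<sigma> j NoSig \<le> 1" "\<sigma> j WinSig = 1" "\<sigma> j LoseSig = 0"
    using assms(1-3) unfolding valid_profile_def undominated_def by auto
  define t where "t = (1 - lam) * \<sigma> j NoSig"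
  have t: "0 \<le> t" "t \<le> 1 - lam"
    unfolding t_def using \<sigma>(1,2) assms(5) mult_left_mono[of "\<sigma> j NoSig" 1 "1 - lam"] by auto
  have "vote_prob lam \<sigma> j b = (if b then lam + t else t)" for b
    unfolding vote_prob_def t_def using \<sigma>(3,4) by simp
  then show "0 \<le> (if j \<in> V then vote_prob lam \<sigma> j (j \<in> W) else 1 - vote_prob lam \<sigma> j (j \<in> W))"
    and "(j \<in> V \<longleftrightarrow> j \<in> W) \<Longrightarrow>
      0 < (if j \<in> V then vote_prob lam \<sigma> j (j \<in> W) else 1 - vote_prob lam \<sigma> j (j \<in> W))"
    using t assms(4,5) by auto
qed

definition uninformed_vote_prob :: "real \<Rightarrow> (nat \<Rightarrow> signal \<Rightarrow> real) \<Rightarrow> nat set \<Rightarrow> nat \<Rightarrow> real" where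
  "uninformed_vote_prob lam \<sigma> V j = (1 - lam) * (if j \<in> V then \<sigma> j NoSig else 1 - \<sigma> j NoSig)"

text \<open>I ranges over the possible sets of informed voters, who vote their type.\<close>

lemma prob_votes_informed_decomp:
  assumes "finite A" "\<forall>j\<in>A. \<sigma> j WinSig = 1 \<and> \<sigma> j LoseSig = 0"
  shows "prob_votes lam \<sigma> W A V = (\<Sum>I\<in>Pow A.
      (if W \<inter> I = V \<inter> I then lam ^ card I else 0) * (\<Prod>j\<in>A - I. uninformed_vote_prob lam \<sigma> V j))"
proof -
  have "prob_votes lam \<sigma> W A V
      = (\<Prod>j\<in>A. lam * (if j \<in> W \<longleftrightarrow> j \<in> V then 1 else 0) + uninformed_vote_prob lam \<sigma> V j)"
    unfolding prob_votes_def using assms(2)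
    by (intro prod.cong refl) (auto simp: vote_prob_def uninformed_vote_prob_def algebra_simps)
  also have "\<dots> = (\<Sum>I\<in>Pow A. (\<Prod>j\<in>I. lam * (if j \<in> W \<longleftrightarrow> j \<in> V then 1 else 0))
      * (\<Prod>j\<in>A - I. uninformed_vote_prob lam \<sigma> V j))"
    using assms(1) by (rule prod_add)
  also have "\<dots> = (\<Sum>I\<in>Pow A.
      (if W \<inter> I = V \<inter> I then lam ^ card I else 0) * (\<Prod>j\<in>A - I. uninformed_vote_prob lam \<sigma> V j))"
  proof (rule sum.cong[OF refl])
    fix I assume "I \<in> Pow A"
    then have "finite I"
      using assms(1) finite_subset by auto
    moreover have "(\<forall>j\<in>I. j \<in> W \<longleftrightarrow> j \<in> V) \<longleftrightarrow> W \<inter> I = V \<inter> I"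
      by blast
    ultimately show "(\<Prod>j\<in>I. lam * (if j \<in> W \<longleftrightarrow> j \<in> V then 1 else 0))
        * (\<Prod>j\<in>A - I. uninformed_vote_prob lam \<sigma> V j)
      = (if W \<inter> I = V \<inter> I then lam ^ card I else 0) * (\<Prod>j\<in>A - I. uninformed_vote_prob lam \<sigma> V j)"
      by (simp add: prod_times_indicator)
  qed
  finally show ?thesis .
qed

definition compatible_gain :: "nat \<Rightarrow> real \<Rightarrow> real \<Rightarrow> real \<Rightarrow> nat \<Rightarrow> nat set \<Rightarrow> nat set \<Rightarrow> real" where
  "compatible_gain n q vw vl i I V =
     (\<Sum>W\<in>winner_sets n q. if W \<inter> I = V \<inter> I then (if i \<in> W then vw else - vl) else 0)"

lemma compatible_gain_eq:
  assumes "i < n" "I \<subseteq> {..<n} - {i}" "card (V \<inter> I) < num_winners n q"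
  shows "compatible_gain n q vw vl i I V
      = vw * ((n - 1 - card I) choose (num_winners n q - 1 - card (V \<inter> I)))
        - vl * ((n - 1 - card I) choose (num_winners n q - card (V \<inter> I)))"
proof -
  have "compatible_gain n q vw vl i I V
      = (\<Sum>W\<in>winner_sets n q. (if i \<in> W \<and> W \<inter> I = V \<inter> I then vw else 0)
          + (if i \<notin> W \<and> W \<inter> I = V \<inter> I then - vl else 0))"
    unfolding compatible_gain_def by (intro sum.cong) auto
  also have "\<dots> = (\<Sum>W\<in>{W \<in> winner_sets n q. i \<in> W \<and> W \<inter> I = V \<inter> I}. vw)
        + (\<Sum>W\<in>{W \<in> winner_sets n q. i \<notin> W \<and> W \<inter> I = V \<inter> I}. - vl)"
    unfolding sum.inter_filter[OF finite_winner_sets] by (rule sum.distrib)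
  finally have "compatible_gain n q vw vl i I V
      = vw * card {W \<in> winner_sets n q. i \<in> W \<and> W \<inter> I = V \<inter> I}
        - vl * card {W \<in> winner_sets n q. i \<notin> W \<and> W \<inter> I = V \<inter> I}"
    by simp
  then show ?thesis
    using card_winner_sets_trace[OF assms] by simp
qed

lemma compatible_gain_sign:
  assumes "i < n" "I \<subseteq> {..<n} - {i}" "V \<subseteq> {..<n} - {i}" "card V = (n - 1) div 2"
    and "(n - 1) div 2 < num_winners n q" "num_winners n q \<le> n"
    and margin: "vl * (real n - real (num_winners n q))
      < vw * (real (num_winners n q) - real ((n - 1) div 2))"
    and "0 \<le> vw" "0 \<le> vl"
  shows "0 \<le> compatible_gain n q vw vl i I V"
    and "W \<in> winner_sets n q \<Longrightarrow> i \<in> W \<Longrightarrow> W \<inter> I = V \<inter> I \<Longrightarrow> 0 < compatible_gain n q vw vl i I V"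
proof -
  define K m t M k where "K = num_winners n q" and "m = (n - 1) div 2" and "t = card (V \<inter> I)"
    and "M = n - 1 - card I" and "k = num_winners n q - 1 - card (V \<inter> I)"
  have "finite V" "finite I"
    using assms(2,3) by (metis finite_Diff finite_lessThan finite_subset)+
  then have "t \<le> m" "t \<le> card I"
    unfolding t_def m_def using assms(4) card_mono[of V "V \<inter> I"] card_mono[of I "V \<inter> I"] by auto
  then have "K - t = Suc k" "M - k \<le> n - K" "K - m \<le> Suc k"
    using assms(5,6) unfolding K_def m_def k_def M_def t_def by auto
  then have "real (M - k) \<le> real (n - K)" "real (K - m) \<le> real (Suc k)"
    by (simp_all only: of_nat_le_iff)
  moreover have "real (n - K) = real n - real K" "real (K - m) = real K - real m"
    using assms(5,6) unfolding K_def m_def by (simp_all add: of_nat_diff)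
  ultimately have "real (M - k) \<le> real n - real K" "real K - real m \<le> real (Suc k)"
    by simp_all
  then have "vl * real (M - k) \<le> vl * (real n - real K)" "vw * (real K - real m) \<le> vw * real (Suc k)"
    using assms(8,9) by (simp_all add: mult_left_mono)
  then have "vl * real (M - k) < vw * real (Suc k)"
    using margin unfolding K_def m_def by linarith
  then have sign: "0 \<le> vw * (M choose k) - vl * (M choose Suc k)"
    "k \<le> M \<Longrightarrow> 0 < vw * (M choose k) - vl * (M choose Suc k)"
    using binomial_diff_sign by auto
  have gain: "compatible_gain n q vw vl i I V = vw * (M choose k) - vl * (M choose Suc k)"
    using compatible_gain_eq[OF assms(1,2)] \<open>t \<le> m\<close> \<open>K - t = Suc k\<close> assms(5)
    unfolding K_def m_def M_def k_def t_def by simp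
  show "0 \<le> compatible_gain n q vw vl i I V"
    using sign(1) gain by simp
  assume "W \<in> winner_sets n q" "i \<in> W" "W \<inter> I = V \<inter> I"
  then have "{W \<in> winner_sets n q. i \<in> W \<and> W \<inter> I = V \<inter> I} \<noteq> {}"
    by blast
  moreover have "finite {W \<in> winner_sets n q. i \<in> W \<and> W \<inter> I = V \<inter> I}"
    using finite_winner_sets by simp
  ultimately have "0 < card {W \<in> winner_sets n q. i \<in> W \<and> W \<inter> I = V \<inter> I}"
    by (simp add: card_gt_0_iff)
  then have "0 < M choose k"
    using card_winner_sets_trace(1)[OF assms(1,2)] \<open>t \<le> m\<close> assms(5)
    unfolding M_def k_def t_def m_def by simp
  then show "0 < compatible_gain n q vw vl i I V"
    using sign(2) gain by simp
qed

lemma sum_gain_prob_votes_eq: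
  assumes "finite S" "\<forall>j\<in>S. \<sigma> j WinSig = 1 \<and> \<sigma> j LoseSig = 0"
  shows "(\<Sum>W\<in>winner_sets n q. (if i \<in> W then vw else - vl) * prob_votes lam \<sigma> W S V)
      = (\<Sum>I\<in>Pow S. lam ^ card I * (\<Prod>j\<in>S - I. uninformed_vote_prob lam \<sigma> V j)
          * compatible_gain n q vw vl i I V)"
proof -
  have "(\<Sum>W\<in>winner_sets n q. (if i \<in> W then vw else - vl) * prob_votes lam \<sigma> W S V)
      = (\<Sum>W\<in>winner_sets n q. \<Sum>I\<in>Pow S. (if i \<in> W then vw else - vl)
          * ((if W \<inter> I = V \<inter> I then lam ^ card I else 0) * (\<Prod>j\<in>S - I. uninformed_vote_prob lam \<sigma> V j)))"
    by (simp add: prob_votes_informed_decomp[OF assms] sum_distrib_left)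
  also have "\<dots> = (\<Sum>I\<in>Pow S. \<Sum>W\<in>winner_sets n q. (if i \<in> W then vw else - vl)
          * ((if W \<inter> I = V \<inter> I then lam ^ card I else 0) * (\<Prod>j\<in>S - I. uninformed_vote_prob lam \<sigma> V j)))"
    by (rule sum.swap)
  also have "\<dots> = (\<Sum>I\<in>Pow S. lam ^ card I * (\<Prod>j\<in>S - I. uninformed_vote_prob lam \<sigma> V j)
          * compatible_gain n q vw vl i I V)"
    unfolding compatible_gain_def sum_distrib_left by (intro sum.cong refl) auto
  finally show ?thesis .
qed

lemma sum_gain_prob_votes_sign:
  assumes "0 < lam" "lam < 1" "valid_profile n \<sigma>" "undominated n \<sigma>" "i < n"
    and "V \<subseteq> {..<n} - {i}" "card V = (n - 1) div 2"
    and "(n - 1) div 2 < num_winners n q" "num_winners n q \<le> n"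
    and margin: "vl * (real n - real (num_winners n q))
      < vw * (real (num_winners n q) - real ((n - 1) div 2))"
    and "0 \<le> vw" "0 \<le> vl"
  shows "0 \<le> (\<Sum>W\<in>winner_sets n q. (if i \<in> W then vw else - vl) * prob_votes lam \<sigma> W ({..<n} - {i}) V)"
    and "W0 \<in> winner_sets n q \<Longrightarrow> i \<in> W0 \<Longrightarrow> 0 < prob_votes lam \<sigma> W0 ({..<n} - {i}) V \<Longrightarrow>
      0 < (\<Sum>W\<in>winner_sets n q. (if i \<in> W then vw else - vl) * prob_votes lam \<sigma> W ({..<n} - {i}) V)"
proof -
  define S where "S = {..<n} - {i}"
  define R where "R I = (\<Prod>j\<in>S - I. uninformed_vote_prob lam \<sigma> V j)" for I
  have S: "finite S" "\<forall>j\<in>S. \<sigma> j WinSig = 1 \<and> \<sigma> j LoseSig = 0"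
    using assms(4) unfolding S_def undominated_def by auto
  have "0 \<le> R I" for I
    using assms(2,3) unfolding R_def S_def valid_profile_def uninformed_vote_prob_def
    by (intro prod_nonneg) auto
  then have term_nonneg: "0 \<le> lam ^ card I * R I * compatible_gain n q vw vl i I V"
    if "I \<in> Pow S" for I
    using compatible_gain_sign(1)[OF assms(5) _ assms(6-12)] that assms(1) unfolding S_def by simp
  have sum_eq: "(\<Sum>W\<in>winner_sets n q. (if i \<in> W then vw else - vl) * prob_votes lam \<sigma> W S V)
      = (\<Sum>I\<in>Pow S. lam ^ card I * R I * compatible_gain n q vw vl i I V)"
    unfolding R_def by (rule sum_gain_prob_votes_eq[OF S])
  moreover have "0 \<le> (\<Sum>I\<in>Pow S. lam ^ card I * R I * compatible_gain n q vw vl i I V)"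
    using term_nonneg by (rule sum_nonneg)
  ultimately show "0 \<le> (\<Sum>W\<in>winner_sets n q.
      (if i \<in> W then vw else - vl) * prob_votes lam \<sigma> W ({..<n} - {i}) V)"
    unfolding S_def by simp
  assume W0: "W0 \<in> winner_sets n q" "i \<in> W0" "0 < prob_votes lam \<sigma> W0 ({..<n} - {i}) V"
  have "\<exists>I\<in>Pow S. 0 < (if W0 \<inter> I = V \<inter> I then lam ^ card I else 0) * R I"
  proof (rule ccontr)
    assume "\<not> ?thesis"
    then have "(\<Sum>I\<in>Pow S. (if W0 \<inter> I = V \<inter> I then lam ^ card I else 0) * R I) \<le> 0"
      by (intro sum_nonpos) (simp add: not_less)
    then show False
      using W0(3) prob_votes_informed_decomp[OF S, of lam W0 V] unfolding R_def S_def by simp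
  qed
  then obtain I where I: "I \<in> Pow S" "W0 \<inter> I = V \<inter> I" "0 < R I"
    using assms(1) by (auto simp: zero_less_mult_iff split: if_splits)
  then have "0 < lam ^ card I * R I * compatible_gain n q vw vl i I V"
    using compatible_gain_sign(2)[OF assms(5) _ assms(6-12) W0(1,2)] assms(1) unfolding S_def by simp
  then show "0 < (\<Sum>W\<in>winner_sets n q.
      (if i \<in> W then vw else - vl) * prob_votes lam \<sigma> W ({..<n} - {i}) V)"
    using sum_pos2[of "Pow S", OF _ I(1) _ term_nonneg] S(1) sum_eq unfolding S_def by simp
qed

lemma pivotal_gain_pos:
  assumes "0 < lam" "lam < 1" "valid_profile n \<sigma>" "undominated n \<sigma>" "i < n"
    and "W \<in> winner_sets n q" "i \<in> W" "V \<subseteq> {..<n} - {i}" "card V = (n - 1) div 2"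
    and "0 < prob_votes lam \<sigma> W ({..<n} - {i}) V"
    and "(n - 1) div 2 < num_winners n q" "num_winners n q \<le> n"
    and margin: "vl * (real n - real (num_winners n q))
      < vw * (real (num_winners n q) - real ((n - 1) div 2))"
    and "0 \<le> vw" "0 \<le> vl"
  shows "0 < pivotal_gain n lam vw vl \<sigma> i (winner_sets n q)"
proof -
  define Piv where "Piv = {V \<in> Pow ({..<n} - {i}). card V = (n - 1) div 2}"
  define E where "E V = (\<Sum>W\<in>winner_sets n q.
      (if i \<in> W then vw else - vl) * prob_votes lam \<sigma> W ({..<n} - {i}) V)" for V
  have "pivotal_gain n lam vw vl \<sigma> i (winner_sets n q) = (\<Sum>V\<in>Piv. E V)"
    unfolding pivotal_gain_def pivot_prob_def E_def Piv_def sum_distrib_left by (rule sum.swap)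
  moreover have "0 < E V"
    unfolding E_def by (rule sum_gain_prob_votes_sign(2)[OF assms(1-5,8,9,11-15,6,7,10)])
  moreover have "0 \<le> E V'" if "V' \<in> Piv" for V'
    using that unfolding E_def Piv_def
    by (intro sum_gain_prob_votes_sign(1)[OF assms(1-5) _ _ assms(11-15)]) auto
  moreover have "finite Piv" "V \<in> Piv"
    using assms(8,9) unfolding Piv_def by auto
  ultimately show ?thesis
    by (simp add: sum_pos2)
qed

lemma exists_losing_realization:
  assumes "num_winners n q \<le> n" "win_prob n q lam \<sigma> \<noteq> 1"
  shows "\<exists>W\<in>winner_sets n q. \<exists>V\<subseteq>{..<n}. \<not> pstar_wins n V \<and> prob_votes lam \<sigma> W {..<n} V \<noteq> 0"
proof (rule ccontr)
  assume none: "\<not> ?thesis"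
  have "(\<Sum>V\<in>Pow {..<n}. if pstar_wins n V then prob_votes lam \<sigma> W {..<n} V else 0) = 1"
    if "W \<in> winner_sets n q" for W
  proof -
    have "(\<Sum>V\<in>Pow {..<n}. if pstar_wins n V then prob_votes lam \<sigma> W {..<n} V else 0)
        = (\<Sum>V\<in>Pow {..<n}. prob_votes lam \<sigma> W {..<n} V)"
      using none that by (intro sum.cong) auto
    also have "\<dots> = 1"
      unfolding prob_votes_def by (rule sum_Pow_prod_Bernoulli) simp
    finally show ?thesis .
  qed
  then have "win_prob n q lam \<sigma> = 1"
    unfolding win_prob_def using card_winner_sets_pos[OF assms(1)] by simp
  with assms(2) show False ..
qed

lemma exists_switch_to_type_card_eq:
  assumes "finite S" "V \<subseteq> S" "card V \<le> m" "m \<le> card (W \<inter> S)"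
  shows "\<exists>Y\<subseteq>S. card ((V - Y) \<union> (W \<inter> Y)) = m"
proof (rule discrete_IVT_subsets[OF assms(1)])
  fix Y x assume "Y \<subseteq> S" "x \<in> S"
  have "finite V" "finite Y"
    using finite_subset[OF assms(2,1)] finite_subset[OF \<open>Y \<subseteq> S\<close> assms(1)] by auto
  then have fin: "finite ((V - Y) \<union> (W \<inter> Y))"
    by simp
  then have "card ((V - insert x Y) \<union> (W \<inter> insert x Y)) \<le> card (insert x ((V - Y) \<union> (W \<inter> Y)))"
    by (intro card_mono) auto
  also have "\<dots> \<le> card ((V - Y) \<union> (W \<inter> Y)) + 1"
    using fin by (simp add: card_insert_if)
  finally show "card ((V - insert x Y) \<union> (W \<inter> insert x Y)) \<le> card ((V - Y) \<union> (W \<inter> Y)) + 1" .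
next
  have "(V - S) \<union> (W \<inter> S) = W \<inter> S"
    using assms(2) by blast
  then show "card ((V - {}) \<union> (W \<inter> {})) \<le> m" "m \<le> card ((V - S) \<union> (W \<inter> S))"
    using assms(3,4) by simp_all
qed

text \<open>(V - X) \<union> (W \<inter> X) is the vote profile V after the voters in X switch to voting
  their type.\<close>

lemma prob_votes_switch_to_type_pos:
  assumes "valid_profile n \<sigma>" "undominated n \<sigma>" "0 < lam" "lam < 1"
    and "A \<subseteq> {..<n}" "B \<subseteq> A" "prob_votes lam \<sigma> W A V \<noteq> 0"
  shows "0 < prob_votes lam \<sigma> W B ((V - X) \<union> (W \<inter> X))"
  unfolding prob_votes_def
proof (rule prod_pos)
  fix j assume "j \<in> B"
  then have "j < n" "j \<in> A"
    using assms(5,6) by auto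
  show "0 < (if j \<in> (V - X) \<union> (W \<inter> X) then vote_prob lam \<sigma> j (j \<in> W) else 1 - vote_prob lam \<sigma> j (j \<in> W))"
  proof (cases "j \<in> X")
    case True
    then show ?thesis
      using vote_factor_bounds(2)[OF assms(1,2) \<open>j < n\<close> assms(3,4), of "(V - X) \<union> (W \<inter> X)" W] by auto
  next
    case False
    have "finite A"
      using finite_subset[OF assms(5)] by simp
    then have "(if j \<in> V then vote_prob lam \<sigma> j (j \<in> W) else 1 - vote_prob lam \<sigma> j (j \<in> W)) \<noteq> 0"
      using assms(7) \<open>j \<in> A\<close> unfolding prob_votes_def by (auto simp: prod_zero_iff)
    then show ?thesis
      using False vote_factor_bounds(1)[OF assms(1,2) \<open>j < n\<close> assms(3,4), of V W] by auto
  qed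
qed

lemma winner_voting_inferior_strategy_lt_1:
  assumes "valid_profile n \<sigma>" "undominated n \<sigma>" "lam < 1" "i < n"
    and "i \<in> W" "i \<notin> V" "prob_votes lam \<sigma> W {..<n} V \<noteq> 0"
  shows "\<sigma> i NoSig < 1"
proof -
  have "\<forall>j\<in>{..<n}. (if j \<in> V then vote_prob lam \<sigma> j (j \<in> W) else 1 - vote_prob lam \<sigma> j (j \<in> W)) \<noteq> 0"
    using assms(7) unfolding prob_votes_def by (simp add: prod_zero_iff)
  then have "(if i \<in> V then vote_prob lam \<sigma> i (i \<in> W) else 1 - vote_prob lam \<sigma> i (i \<in> W)) \<noteq> 0"
    using assms(4) by blast
  then have "1 - vote_prob lam \<sigma> i True \<noteq> 0"
    using assms(5,6) by simp
  moreover have "vote_prob lam \<sigma> i True = 1 - (1 - lam) * (1 - \<sigma> i NoSig)"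
    using assms(2,4) by (simp add: vote_prob_def undominated_def algebra_simps)
  moreover have "\<sigma> i NoSig \<le> 1"
    using assms(1,4) by (simp add: valid_profile_def)
  ultimately show ?thesis
    by auto
qed

lemma exists_pivotal_realization:
  assumes "valid_profile n \<sigma>" "undominated n \<sigma>" "0 < lam" "lam < 1"
    and "W \<in> winner_sets n q" "V \<subseteq> {..<n}" "card V \<le> (n - 1) div 2"
    and "prob_votes lam \<sigma> W {..<n} V \<noteq> 0" "(n - 1) div 2 < num_winners n q"
  shows "\<exists>i\<in>W - V. \<sigma> i NoSig < 1 \<and>
    (\<exists>V'\<subseteq>{..<n} - {i}. card V' = (n - 1) div 2 \<and> 0 < prob_votes lam \<sigma> W ({..<n} - {i}) V')"
proof -
  have W: "W \<subseteq> {..<n}" "card W = num_winners n q" "finite W"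
    using winner_sets_subset[OF assms(5)] card_winner_set[OF assms(5)] finite_subset by auto
  have "\<not> W \<subseteq> V"
  proof
    assume "W \<subseteq> V"
    then have "card W \<le> card V"
      using assms(6) by (intro card_mono) (auto intro: finite_subset)
    then show False
      using assms(7,9) W(2) by simp
  qed
  then obtain i where i: "i \<in> W" "i \<notin> V"
    by blast
  then have "i < n"
    using W(1) by blast
  define S where "S = {..<n} - {i}"
  have "W \<inter> S = W - {i}"
    using W(1) unfolding S_def by auto
  then have "(n - 1) div 2 \<le> card (W \<inter> S)"
    using W(2,3) i(1) assms(9) by simp
  moreover have "V \<subseteq> S"
    using assms(6) i(2) unfolding S_def by auto
  ultimately obtain Y where "Y \<subseteq> S" "card ((V - Y) \<union> (W \<inter> Y)) = (n - 1) div 2"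
    using exists_switch_to_type_card_eq[of S V "(n - 1) div 2" W] assms(7) unfolding S_def by auto
  moreover have "(V - Y) \<union> (W \<inter> Y) \<subseteq> S"
    using assms(6) i(2) \<open>Y \<subseteq> S\<close> unfolding S_def by auto
  moreover have "0 < prob_votes lam \<sigma> W S ((V - Y) \<union> (W \<inter> Y))"
    using prob_votes_switch_to_type_pos[OF assms(1-4) order_refl _ assms(8)] unfolding S_def by auto
  ultimately show ?thesis
    using i winner_voting_inferior_strategy_lt_1[OF assms(1,2,4) \<open>i < n\<close> i assms(8)] unfolding S_def
    by (intro bexI[of _ i] conjI exI[of _ "(V - Y) \<union> (W \<inter> Y)"]) auto
qed

lemma equilibrium_win_prob_eq_1:
  assumes "1/2 \<le> q" "q < 1" "0 < vw" "0 < vl" "vl / vw \<le> (q - 1/2) / (1 - q)"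
    and "odd n" "0 < lam" "lam < 1" "is_equilibrium n q lam vw vl \<sigma>"
  shows "win_prob n q lam \<sigma> = 1"
proof (rule ccontr)
  assume "win_prob n q lam \<sigma> \<noteq> 1"
  have mK: "(n - 1) div 2 < num_winners n q" "num_winners n q \<le> n"
    using majority_lt_num_winners[OF assms(1,6)] num_winners_le assms(1,2) by auto
  have eq: "valid_profile n \<sigma>" "undominated n \<sigma>"
    using assms(9) unfolding is_equilibrium_def by auto
  obtain W V where W: "W \<in> winner_sets n q" "V \<subseteq> {..<n}" "\<not> pstar_wins n V"
    "prob_votes lam \<sigma> W {..<n} V \<noteq> 0"
    using exists_losing_realization[OF mK(2) \<open>win_prob n q lam \<sigma> \<noteq> 1\<close>] by blast
  moreover have "card V \<le> (n - 1) div 2"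
    using W(3) by (simp add: pstar_wins_def)
  ultimately obtain i V' where i: "i \<in> W" "i \<notin> V" "\<sigma> i NoSig < 1"
    and V': "V' \<subseteq> {..<n} - {i}" "card V' = (n - 1) div 2" "0 < prob_votes lam \<sigma> W ({..<n} - {i}) V'"
    using exists_pivotal_realization[OF eq assms(7,8) W(1,2) _ W(4) mK(1)] by blast
  have "i < n"
    using i(1) winner_sets_subset[OF \<open>W \<in> winner_sets n q\<close>] by blast
  have "0 < pivotal_gain n lam vw vl \<sigma> i (winner_sets n q)"
    using pivotal_gain_pos[OF assms(7,8) eq \<open>i < n\<close> \<open>W \<in> winner_sets n q\<close> i(1) V' mK
        num_winners_margin[OF assms(1-3) _ assms(5,6)]] assms(3,4) by simp
  moreover have "cond_sets n q i NoSig = winner_sets n q" "winner_sets n q \<noteq> {}"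
    using \<open>W \<in> winner_sets n q\<close> by (auto simp: cond_sets_def)
  moreover have "\<forall>x\<in>{0..1}. interim_payoff n q lam vw vl \<sigma> i NoSig x
      \<le> interim_payoff n q lam vw vl \<sigma> i NoSig (\<sigma> i NoSig)"
    using assms(9) \<open>i < n\<close> calculation(2,3) unfolding is_equilibrium_def by blast
  then have "\<not> interim_payoff n q lam vw vl \<sigma> i NoSig (\<sigma> i NoSig)
      < interim_payoff n q lam vw vl \<sigma> i NoSig 1"
    by (simp add: not_less)
  ultimately show False
    using i(3) by (simp add: interim_payoff_less_iff)
qed

theorem proposition5:
  fixes q vw vl :: real
  assumes "1/2 \<le> q" "q < 1" "0 < vw" "0 < vl" "vl / vw < q / (1 - q)"
  shows "(( q - 1/2) / (1 - q) < vl / vw \<longrightarrow>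
            (\<exists>lstar>0. lstar \<le> 1 \<and>
               (\<forall>lam. 0 < lam \<and> lam < lstar \<longrightarrow>
                 (\<forall>\<epsilon>. 0 < \<epsilon> \<and> \<epsilon> < 1 \<longrightarrow>
                   (\<exists>N::nat. \<forall>n. odd n \<and> 3 \<le> n \<and> N < n \<longrightarrow>
                      (\<exists>\<sigma>. is_strict_equilibrium n q lam vw vl \<sigma> \<and>
                           1 - win_prob n q lam \<sigma> \<ge> 1 - \<epsilon>))))))
       \<and> (vl / vw \<le> (q - 1/2) / (1 - q) \<longrightarrow>
            (\<forall>n lam \<sigma>. odd n \<and> 3 \<le> n \<and> 0 < lam \<and> lam < 1 \<and>
               is_equilibrium n q lam vw vl \<sigma> \<longrightarrow> win_prob n q lam \<sigma> = 1))"
  using exists_lstar_inferior_wins[OF assms(1-4)] equilibrium_win_prob_eq_1[OF assms(1-4)] by blast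

end
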